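(* Let $d$ be an odd prime and $\Omega$, $\Pi^j_k$ as in the context. For every $\rho\in\Omega$, and in particular for every fiducial state $\rho=|\phi\rangle\langle\phi|$, one has $$\mathrm{Tr}(\rho\Pi^j_k)\le\frac1d+\frac{d-1}{d}\sqrt{\frac{1}{d+1}}$$ for all $j=0,\dots,d$ and $k=0,\dots,d-1$.
   Context: Let $d$ be an odd prime and $\omega=e^{2\pi i/d}$; for real $x$, $\omega^{x}$ means $e^{2\pi i x/d}$. Let $\{|k\rangle\}_{k=0}^{d-1}$ be the computational basis of $\mathbb{C}^d$, with indices taken modulo $d$. Let $X|k\rangle=|k+1\rangle$ and $Z|k\rangle=\omega^k|k\rangle$, and $\tau=-e^{i\pi/d}$. For $\mathbf p=(p_1,p_2)\in\mathbb{Z}_d^2$ set $D_{\mathbf p}=\tau^{p_1p_2}X^{p_1}Z^{p_2}$. For $j\in\{0,\dots,d-1\}$, let $\Pi^j_k$ be the rank-one projector onto the eigenvector of $D_{(1,j)}$ with eigenvalue $\omega^k$. Let $\Pi^d_k=|k\rangle\langle k|$. These $d+1$ bases are mutually unbiased. A unit vector $|\phi\rangle$ is fiducial if $|\langle\phi|D_{\mathbf p}|\phi\rangle|^2=\frac1{d+1}$ for all $\mathbf p\neq(0,0)$. $\Omega$ denotes the set of all operators $\rho=\sum_{j=0}^{d}\sum_{k=0}^{d-1}\big(p^j_k-\tfrac{1}{d+1}\big)\Pi^j_k$ with $p^j_k=\frac1d+\frac{1}{d\sqrt{d+1}}\sum_{r=1}^{d-1}\omega^{\alpha^j_r+kr}$,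 where the $\alpha^j_r\in\mathbb{R}$ ($j=0,\dots,d$, $r=1,\dots,d-1$) satisfy $\alpha^j_{d-r}=-\alpha^j_r$. *)

theory Defs
  imports "HOL-Analysis.Analysis" "Jordan_Normal_Form.Matrix"
begin

text \<open>Operators on C^d are represented as complex d x d matrices (Jordan_Normal_Form),
  vectors as complex vectors of dimension d; indices of the computational basis
  are 0..d-1 and are taken modulo d.\<close>

definition omega :: "nat \<Rightarrow> complex" where
  "omega d = exp (2 * pi * \<i> / of_nat d)"

definition omega_pow :: "nat \<Rightarrow> real \<Rightarrow> complex" where
  "omega_pow d x = exp (2 * pi * \<i> * complex_of_real x / of_nat d)"

definition tau :: "nat \<Rightarrow> complex" where
  "tau d = - exp (\<i> * pi / of_nat d)"

definition shiftX :: "nat \<Rightarrow> complex mat" where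
  "shiftX d = mat d d (\<lambda>(a, b). if a = (b + 1) mod d then 1 else 0)"

definition clockZ :: "nat \<Rightarrow> complex mat" where
  "clockZ d = mat d d (\<lambda>(a, b). if a = b then omega d ^ a else 0)"

definition displ :: "nat \<Rightarrow> nat \<times> nat \<Rightarrow> complex mat" where
  "displ d p = tau d ^ (fst p * snd p) \<cdot>\<^sub>m (shiftX d ^\<^sub>m fst p * clockZ d ^\<^sub>m snd p)"

definition unit_vec_d :: "nat \<Rightarrow> complex vec \<Rightarrow> bool" where
  "unit_vec_d d v \<longleftrightarrow> v \<in> carrier_vec d \<and> (\<Sum>i<d. (cmod (v $ i))\<^sup>2) = 1"

definition proj :: "nat \<Rightarrow> complex vec \<Rightarrow> complex mat" where
  "proj d v = mat d d (\<lambda>(a, b). v $ a * cnj (v $ b))"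

definition mtrace :: "nat \<Rightarrow> complex mat \<Rightarrow> complex" where
  "mtrace d A = (\<Sum>i<d. A $$ (i, i))"

text \<open>Pi^j_k: for j < d the rank-one projector onto a (normalised) eigenvector of
  D_(1,j) with eigenvalue omega^k (the eigenspace is one-dimensional, so this does not
  depend on the choice); for j = d the projector |k><k|.\<close>
definition mub_proj :: "nat \<Rightarrow> nat \<Rightarrow> nat \<Rightarrow> complex mat" where
  "mub_proj d j k =
    (if j = d then proj d (unit_vec d k)
     else proj d (SOME v. unit_vec_d d v \<and> displ d (1, j) *\<^sub>v v = omega d ^ k \<cdot>\<^sub>v v))"

definition pjk :: "nat \<Rightarrow> (nat \<Rightarrow> nat \<Rightarrow> real) \<Rightarrow> nat \<Rightarrow> nat \<Rightarrow> complex" where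
  "pjk d \<alpha> j k = 1 / of_nat d + 1 / (of_nat d * complex_of_real (sqrt (real d + 1))) *
       (\<Sum>r\<in>{1..d-1}. omega_pow d (\<alpha> j r + real (k * r)))"

definition rho_of :: "nat \<Rightarrow> (nat \<Rightarrow> nat \<Rightarrow> real) \<Rightarrow> complex mat" where
  "rho_of d \<alpha> = mat d d (\<lambda>(a, b). \<Sum>j\<in>{0..d}. \<Sum>k\<in>{0..<d}.
       (pjk d \<alpha> j k - 1 / (of_nat d + 1)) * mub_proj d j k $$ (a, b))"

definition Omega :: "nat \<Rightarrow> complex mat set" where
  "Omega d = {rho_of d \<alpha> | \<alpha>. \<forall>j\<le>d. \<forall>r\<in>{1..d-1}. \<alpha> j (d - r) = - \<alpha> j r}"

definition fiducial :: "nat \<Rightarrow> complex vec \<Rightarrow> bool" where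
  "fiducial d \<phi> \<longleftrightarrow> unit_vec_d d \<phi> \<and>
     (\<forall>p1<d. \<forall>p2<d. (p1, p2) \<noteq> (0, 0) \<longrightarrow>
        (cmod (conjugate \<phi> \<bullet> (displ d (p1, p2) *\<^sub>v \<phi>)))\<^sup>2 = 1 / (real d + 1))"

end

theory Submission
  imports Defs "HOL-Number_Theory.Cong"
begin

text \<open>The eigenvectors of D(1,j) are explicit quadratic chirps, so the overlap of vectors from two
  different bases is a quadratic Gauss sum, of modulus sqrt d since d is prime. Hence the d + 1
  bases are mutually unbiased and Tr(\<rho> \<Pi>^j_k) = p^j_k for \<rho> in \<Omega>. The antisymmetry of \<alpha>^j pairs
  the d - 1 unimodular phases in p^j_k into conjugates, so p^j_k is real, and the triangle
  inequality bounds their sum by d - 1.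

  For a fiducial \<phi>, d |\<langle>\<phi>|e\<rangle>|^2 is a sum over t < d of phases times the expectation values
  \<langle>\<phi>|D(t, j t)|\<phi>\<rangle> (or \<langle>\<phi>|D(0, t)|\<phi>\<rangle> for the computational basis). The term t = 0 is 1 and
  the other d - 1 terms have modulus 1/sqrt(d + 1), which is exactly the bound.\<close>

definition omega_int :: "nat \<Rightarrow> int \<Rightarrow> complex" where
  "omega_int d x = omega_pow d (of_int x)"

lemma cnj_mult_self: "cnj z * z = complex_of_real ((cmod z)\<^sup>2)"
  by (simp only: complex_norm_square mult.commute)

lemma omega_pow_add: "omega_pow d (x + y) = omega_pow d x * omega_pow d y"
  unfolding omega_pow_def by (simp add: exp_add[symmetric] distrib_left add_divide_distrib)

lemma norm_omega_pow [simp]: "cmod (omega_pow d x) = 1"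
  unfolding omega_pow_def by (simp add: norm_exp_eq_Re)

lemma cnj_omega_pow: "cnj (omega_pow d x) = omega_pow d (- x)"
  unfolding omega_pow_def by (simp add: exp_cnj)

lemma omega_pow_of_int: "omega_pow d (of_int x) = omega_int d x"
  unfolding omega_int_def ..

lemma omega_int_add: "omega_int d (x + y) = omega_int d x * omega_int d y"
  unfolding omega_int_def by (simp add: omega_pow_add)

lemma omega_int_0 [simp]: "omega_int d 0 = 1"
  unfolding omega_int_def omega_pow_def by simp

lemma norm_omega_int [simp]: "cmod (omega_int d x) = 1"
  unfolding omega_int_def by simp

lemma cnj_omega_int: "cnj (omega_int d x) = omega_int d (- x)"
  unfolding omega_int_def by (simp add: cnj_omega_pow)

lemma cnj_omega_int_mult: "cnj (omega_int d x) * omega_int d y = omega_int d (y - x)"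
  unfolding cnj_omega_int omega_int_add[symmetric] by simp

lemma omega_int_power: "omega_int d x ^ n = omega_int d (int n * x)"
  by (induction n) (simp_all add: omega_int_add[symmetric] algebra_simps)

lemma omega_power: "omega d ^ n = omega_int d (int n)"
proof -
  have "omega d = omega_int d 1"
    unfolding omega_def omega_int_def omega_pow_def by simp
  then show ?thesis by (simp add: omega_int_power)
qed

lemma omega_int_eq_1_iff:
  assumes "d > 0"
  shows "omega_int d x = 1 \<longleftrightarrow> int d dvd x"
proof -
  have "2 * pi * of_int x / real d = 2 * of_int n * pi \<longleftrightarrow> x = int d * n" for n :: int
  proof -
    have "2 * pi * of_int x / real d = 2 * of_int n * pi \<longleftrightarrow> real_of_int x = real_of_int (int d * n)"
      using assms by (auto simp: field_simps)
    then show ?thesis by (simp only: of_int_eq_iff)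
  qed
  then show ?thesis
    unfolding omega_int_def omega_pow_def exp_eq_1 dvd_def by simp
qed

lemma omega_int_cong:
  assumes "d > 0" and "x mod int d = y mod int d"
  shows "omega_int d x = omega_int d y"
proof -
  obtain m where "x = y + int d * m"
    using assms(2) by (metis mod_eq_dvd_iff dvdE diff_eq_eq add.commute)
  then show ?thesis
    using omega_int_eq_1_iff[OF assms(1), of "int d * m"] by (simp add: omega_int_add)
qed

lemma tau_power:
  assumes "odd d"
  shows "tau d ^ n = omega_int d (int ((d + 1) div 2) * int n)"
proof -
  have "d > 0" using assms by (cases d) auto
  have "(d + 1) div 2 * 2 = d + 1"
    using assms by presburger
  then have "2 * real ((d + 1) div 2) = real d + 1"
    by (metis of_nat_1 of_nat_add of_nat_mult of_nat_numeral mult.commute)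
  then have "2 * pi * real ((d + 1) div 2) / real d = pi + pi / real d"
    using \<open>d > 0\<close> by (simp add: field_simps)
  then have "2 * pi * \<i> * of_int (int ((d + 1) div 2)) / of_nat d
      = complex_of_real (pi + pi / real d) * \<i>"
    by (metis (no_types, lifting) of_int_of_nat_eq of_real_of_nat_eq of_real_numeral of_real_mult
        of_real_divide mult.commute mult.left_commute times_divide_eq_left)
  then have "tau d = omega_int d (int ((d + 1) div 2))"
    unfolding tau_def omega_int_def omega_pow_def by (simp add: exp_add algebra_simps)
  then show ?thesis by (simp add: omega_int_power mult.commute)
qed

lemma sum_omega_int:
  assumes "d > 0"
  shows "(\<Sum>t<d. omega_int d (int t * m)) = (if int d dvd m then of_nat d else 0)"
proof (cases "int d dvd m")
  case True
  then have "omega_int d (int t * m) = 1" for t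
    using omega_int_eq_1_iff[OF assms] by simp
  then show ?thesis using True by simp
next
  case False
  then have "omega_int d m \<noteq> 1" using omega_int_eq_1_iff[OF assms] by simp
  moreover have "omega_int d m ^ d = 1"
    using omega_int_eq_1_iff[OF assms] by (simp add: omega_int_power)
  ultimately have "(\<Sum>t<d. omega_int d m ^ t) = 0"
    by (simp add: sum_gp_strict)
  then show ?thesis using False by (simp add: omega_int_power)
qed

lemma periodic_add_mult:
  fixes F :: "int \<Rightarrow> 'a"
  assumes "\<And>x. F (x + p) = F x"
  shows "F (x + p * n) = F x"
proof (induction n rule: int_induct[where k=0])
  case (step1 n)
  then show ?case using assms[of "x + p * n"] by (simp add: algebra_simps)
next
  case (step2 n)
  then show ?case using assms[of "x + p * (n - 1)"] by (simp add: algebra_simps)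
qed simp

lemma periodic_mod:
  fixes F :: "int \<Rightarrow> 'a"
  assumes "\<And>x. F (x + p) = F x"
  shows "F (x mod p) = F x"
  using periodic_add_mult[of F p, OF assms, of "x mod p" "x div p"] by simp

lemma sum_periodic_shift:
  fixes F :: "int \<Rightarrow> 'a::comm_monoid_add"
  assumes "d > 0" and "\<And>x. F (x + int d) = F x"
  shows "(\<Sum>t<d. F (s + int t)) = (\<Sum>t<d. F (int t))"
proof -
  have "(\<Sum>t<d. F (s + int t)) = (\<Sum>t<d. F (int (nat ((s + int t) mod int d))))"
    using periodic_mod[of F, OF assms(2)] assms(1) by simp
  also have "\<dots> = (\<Sum>t<d. F (int t))"
  proof (rule sum.reindex_bij_witness[where j="\<lambda>t. nat ((s + int t) mod int d)"
        and i="\<lambda>u. nat ((int u - s) mod int d)"])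
    fix t assume "t \<in> {..<d}"
    then show "nat ((int (nat ((s + int t) mod int d)) - s) mod int d) = t"
      using assms(1) by (simp add: mod_diff_left_eq)
  next
    fix u assume "u \<in> {..<d}"
    then show "nat ((s + int (nat ((int u - s) mod int d))) mod int d) = u"
      using assms(1) by (simp add: mod_add_right_eq)
  qed (use assms(1) in \<open>auto simp: nat_less_iff\<close>)
  finally show ?thesis .
qed

section \<open>Quadratic Gauss sums\<close>

text \<open>\<open>tri x = x(x-1)/2\<close> stands in for \<open>x\<^sup>2/2\<close>: it is an integer, so quadratic phases can be
  written without inverting \<open>2\<close> modulo \<open>d\<close>.\<close>

definition tri :: "int \<Rightarrow> int" where
  "tri x = x * (x - 1) div 2"

lemma tri_0 [simp]: "tri 0 = 0"
  unfolding tri_def by simp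

lemma two_tri: "2 * tri x = x * (x - 1)"
  unfolding tri_def by simp

lemma tri_add: "tri (x + y) = tri x + tri y + x * y"
proof -
  have "2 * tri (x + y) = 2 * (tri x + tri y + x * y)"
    by (simp only: two_tri distrib_left) (simp add: two_tri algebra_simps)
  then show ?thesis by simp
qed

lemma tri_of_odd:
  assumes "odd d"
  shows "tri (int d) = int d * ((int d - 1) div 2)"
proof -
  have "2 * tri (int d) = 2 * (int d * ((int d - 1) div 2))"
    using assms by (simp add: two_tri)
  then show ?thesis by simp
qed

lemma omega_int_quadratic_periodic:
  assumes "odd d"
  shows "omega_int d (A * (x + int d) + B * tri (x + int d)) = omega_int d (A * x + B * tri x)"
proof -
  have "d > 0" using assms by (cases d) auto
  have "A * (x + int d) + B * tri (x + int d)
      = (A * x + B * tri x) + int d * (A + B * ((int d - 1) div 2) + B * x)"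
    by (simp add: tri_add tri_of_odd[OF assms] algebra_simps)
  then show ?thesis
    using omega_int_eq_1_iff[OF \<open>d > 0\<close>] by (simp add: omega_int_add)
qed

lemma quadratic_gauss_sum_norm:
  assumes "prime d" and "odd d" and "\<not> int d dvd B"
  shows "(cmod (\<Sum>b<d. omega_int d (A * int b + B * tri (int b))))\<^sup>2 = real d"
proof -
  have d: "d > 0" using assms prime_gt_0_nat by blast
  define q where "q x = A * x + B * tri x" for x
  define G where "G = (\<Sum>b<d. omega_int d (q (int b)))"
  have q_shift: "q (b + t) - q b = q t + b * (B * t)" for b t
    unfolding q_def by (simp add: tri_add algebra_simps)
  have q_periodic: "omega_int d (q (x + int d)) = omega_int d (q x)" for x
    unfolding q_def by (rule omega_int_quadratic_periodic[OF assms(2)])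
  have inner_sum: "(\<Sum>b<d. omega_int d (q (int b) - q (int b')))
      = (\<Sum>t<d. omega_int d (q (int t)) * omega_int d (int b' * (B * int t)))" for b'
  proof -
    have "omega_int d (q (x + int d) - q (int b')) = omega_int d (q x - q (int b'))" for x
      using q_periodic[of x] by (simp only: diff_conv_add_uminus omega_int_add)
    from sum_periodic_shift[where F="\<lambda>x. omega_int d (q x - q (int b'))", OF d this, of "int b'"]
    have "(\<Sum>b<d. omega_int d (q (int b) - q (int b')))
        = (\<Sum>t<d. omega_int d (q (int b' + int t) - q (int b')))"
      by simp
    also have "\<dots> = (\<Sum>t<d. omega_int d (q (int t)) * omega_int d (int b' * (B * int t)))"
      by (simp only: q_shift omega_int_add mult.assoc)
    finally show ?thesis .
  qed
  have dvd_iff: "int d dvd B * int t \<longleftrightarrow> t = 0" if "t < d" for t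
  proof
    assume "int d dvd B * int t"
    then have "int d dvd int t" using assms(1,3) by (simp add: prime_dvd_mult_iff)
    then show "t = 0" using that by (auto dest: zdvd_imp_le simp: of_nat_dvd_iff)
  qed simp
  have "G * cnj G = (\<Sum>b'<d. \<Sum>b<d. omega_int d (q (int b) - q (int b')))"
    unfolding G_def cnj_sum sum_product
    by (subst sum.swap) (simp add: cnj_omega_int omega_int_add[symmetric])
  also have "\<dots> = (\<Sum>t<d. omega_int d (q (int t)) * (\<Sum>b'<d. omega_int d (int b' * (B * int t))))"
    unfolding inner_sum sum_distrib_left by (rule sum.swap)
  also have "\<dots> = (\<Sum>t<d. if t = 0 then of_nat d else 0)"
    using d dvd_iff by (intro sum.cong refl) (simp add: sum_omega_int q_def)
  also have "\<dots> = of_nat d" using d by simp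
  finally have "G * cnj G = of_nat d" .
  then show ?thesis
    unfolding G_def q_def by (metis complex_norm_square of_real_eq_iff of_real_of_nat_eq)
qed

lemma mod_add_right_inj:
  fixes b c n d :: nat
  assumes "b < d" and "c < d"
  shows "(b + n) mod d = (c + n) mod d \<longleftrightarrow> b = c"
  using assms cong_add_rcancel_nat[of b n c d] by (simp add: cong_def)

lemma dvd_diff_less_iff:
  assumes "b < d" and "k < d"
  shows "int d dvd (int b - int k) \<longleftrightarrow> b = k"
proof
  assume dv: "int d dvd (int b - int k)"
  show "b = k"
  proof (rule ccontr)
    assume "b \<noteq> k"
    then have "int b - int k \<noteq> 0" by simp
    from dvd_imp_le_int[OF this dv] show False using assms by arith
  qed
qed simp

lemma bij_betw_add_mod:
  fixes t d :: nat
  shows "bij_betw (\<lambda>b. (b + t) mod d) {..<d} {..<d}"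
proof -
  have "inj_on (\<lambda>b. (b + t) mod d) {..<d}"
  proof (rule inj_onI)
    fix x y assume "x \<in> {..<d}" "y \<in> {..<d}" "(x + t) mod d = (y + t) mod d"
    then show "x = y" using mod_add_right_inj[of x d y t] by simp
  qed
  moreover have "(\<lambda>b. (b + t) mod d) ` {..<d} = {..<d}"
    using calculation by (intro endo_inj_surj) auto
  ultimately show ?thesis unfolding bij_betw_def ..
qed

lemma index_mult_mat_lessThan:
  assumes "A \<in> carrier_mat n m" and "B \<in> carrier_mat m l" and "i < n" and "j < l"
  shows "(A * B) $$ (i, j) = (\<Sum>c<m. A $$ (i, c) * B $$ (c, j))"
  using assms by (simp add: scalar_prod_def lessThan_atLeast0)

lemma index_mult_mat_vec_lessThan:
  assumes "A \<in> carrier_mat n m" and "v \<in> carrier_vec m" and "i < n"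
  shows "(A *\<^sub>v v) $ i = (\<Sum>c<m. A $$ (i, c) * v $ c)"
  using assms by (simp add: scalar_prod_def lessThan_atLeast0)

lemma sum_lessThan_delta:
  fixes f :: "nat \<Rightarrow> 'a::comm_monoid_add"
  shows "t < d \<Longrightarrow> (\<Sum>c<d. if c = t then f c else 0) = f t"
  by (subst sum.delta) auto

lemma shiftX_carrier [simp]: "shiftX d \<in> carrier_mat d d"
  unfolding shiftX_def by simp

lemma clockZ_carrier [simp]: "clockZ d \<in> carrier_mat d d"
  unfolding clockZ_def by simp

lemma displ_carrier [simp]: "displ d p \<in> carrier_mat d d"
  unfolding displ_def by (simp add: mult_carrier_mat[of _ d d _ d])

lemma dim_displ [simp]: "dim_row (displ d p) = d" "dim_col (displ d p) = d"
  using displ_carrier[of d p] unfolding carrier_mat_def by auto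

lemma index_shiftX:
  "i < d \<Longrightarrow> b < d \<Longrightarrow> shiftX d $$ (i, b) = (if i = (b + 1) mod d then 1 else 0)"
  unfolding shiftX_def by simp

lemma index_clockZ:
  "i < d \<Longrightarrow> b < d \<Longrightarrow> clockZ d $$ (i, b) = (if i = b then omega_int d (int i) else 0)"
  unfolding clockZ_def by (simp add: omega_power)

lemma index_shiftX_power:
  assumes "i < d" and "b < d"
  shows "(shiftX d ^\<^sub>m n) $$ (i, b) = (if i = (b + n) mod d then 1 else 0)"
  using assms
proof (induction n arbitrary: i b)
  case 0
  then show ?case by (simp add: shiftX_def)
next
  case (Suc n)
  have "(shiftX d ^\<^sub>m Suc n) $$ (i, b)
      = (\<Sum>c<d. (shiftX d ^\<^sub>m n) $$ (i, c) * shiftX d $$ (c, b))"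
    using Suc.prems
    by (simp only: pow_mat.simps(2), intro index_mult_mat_lessThan[of _ d d _ d]) simp_all
  also have "\<dots> = (\<Sum>c<d. if c = (b + 1) mod d then (if i = (c + n) mod d then 1 else 0) else 0)"
    using Suc.prems by (intro sum.cong) (auto simp: Suc.IH index_shiftX)
  also have "\<dots> = (if i = (b + Suc n) mod d then 1 else 0)"
    using Suc.prems by (subst sum_lessThan_delta) (auto simp: mod_add_left_eq)
  finally show ?case .
qed

lemma index_clockZ_power:
  assumes "i < d" and "b < d"
  shows "(clockZ d ^\<^sub>m n) $$ (i, b) = (if i = b then omega_int d (int i * int n) else 0)"
  using assms
proof (induction n arbitrary: i b)
  case 0
  then show ?case by (simp add: clockZ_def)
next
  case (Suc n)
  have "(clockZ d ^\<^sub>m Suc n) $$ (i, b)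
      = (\<Sum>c<d. (clockZ d ^\<^sub>m n) $$ (i, c) * clockZ d $$ (c, b))"
    using Suc.prems
    by (simp only: pow_mat.simps(2), intro index_mult_mat_lessThan[of _ d d _ d]) simp_all
  also have "\<dots> = (\<Sum>c<d. if c = i then
      (if i = b then omega_int d (int i * int n) * omega_int d (int i) else 0) else 0)"
    using Suc.prems by (intro sum.cong) (auto simp: Suc.IH index_clockZ)
  also have "\<dots> = (if i = b then omega_int d (int i * int (Suc n)) else 0)"
    using Suc.prems by (subst sum_lessThan_delta) (auto simp: omega_int_add[symmetric] algebra_simps)
  finally show ?case .
qed

lemma index_displ:
  assumes "a < d" and "b < d"
  shows "displ d (p1, p2) $$ (a, b)
    = (if a = (b + p1) mod d then tau d ^ (p1 * p2) * omega_int d (int b * int p2) else 0)"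
proof -
  have "(shiftX d ^\<^sub>m p1 * clockZ d ^\<^sub>m p2) $$ (a, b)
      = (\<Sum>c<d. (shiftX d ^\<^sub>m p1) $$ (a, c) * (clockZ d ^\<^sub>m p2) $$ (c, b))"
    using assms by (intro index_mult_mat_lessThan[of _ d d _ d]) simp_all
  also have "\<dots> = (\<Sum>c<d. if c = b then
      (if a = (b + p1) mod d then omega_int d (int b * int p2) else 0) else 0)"
    using assms by (intro sum.cong) (auto simp: index_shiftX_power index_clockZ_power)
  also have "\<dots> = (if a = (b + p1) mod d then omega_int d (int b * int p2) else 0)"
    using assms by (simp add: sum_lessThan_delta)
  moreover have "shiftX d ^\<^sub>m p1 * clockZ d ^\<^sub>m p2 \<in> carrier_mat d d"
    by (simp add: mult_carrier_mat[of _ d d _ d])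
  ultimately show ?thesis
    using assms unfolding displ_def by (simp del: index_mult_mat)
qed

lemma index_displ_mult_vec_shift:
  assumes "v \<in> carrier_vec d" and "b < d"
  shows "(displ d (p1, p2) *\<^sub>v v) $ ((b + p1) mod d)
    = tau d ^ (p1 * p2) * omega_int d (int b * int p2) * v $ b"
proof -
  have "(displ d (p1, p2) *\<^sub>v v) $ ((b + p1) mod d)
      = (\<Sum>c<d. displ d (p1, p2) $$ ((b + p1) mod d, c) * v $ c)"
    using assms by (intro index_mult_mat_vec_lessThan[of _ d d]) simp_all
  also have "\<dots> = (\<Sum>c<d. if c = b then tau d ^ (p1 * p2) * omega_int d (int c * int p2) * v $ c else 0)"
    using assms by (intro sum.cong) (auto simp: index_displ mod_add_right_inj)
  also have "\<dots> = tau d ^ (p1 * p2) * omega_int d (int b * int p2) * v $ b"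
    using assms(2) by (rule sum_lessThan_delta)
  finally show ?thesis .
qed

section \<open>Eigenvectors of the displacement operators\<close>

text \<open>Since \<open>(d + 1) div 2\<close> inverts \<open>2\<close> modulo \<open>d\<close>, \<open>mub_phase d j k b\<close> is congruent to
  \<open>j b\<^sup>2/2 - k b\<close> modulo \<open>d\<close>.\<close>

definition mub_phase :: "nat \<Rightarrow> nat \<Rightarrow> nat \<Rightarrow> int \<Rightarrow> int" where
  "mub_phase d j k x = (int ((d + 1) div 2) * int j - int k) * x + int j * tri x"

lemma mub_phase_add: "mub_phase d j k (x + y) = mub_phase d j k x + mub_phase d j k y + int j * x * y"
  unfolding mub_phase_def by (simp add: tri_add algebra_simps)

lemma mub_phase_Suc:
  "mub_phase d j k (x + 1) = mub_phase d j k x + int ((d + 1) div 2) * int j - int k + int j * x"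
  unfolding mub_phase_add by (simp add: mub_phase_def tri_def)

lemma mub_phase_periodic:
  "odd d \<Longrightarrow> omega_int d (mub_phase d j k (x + int d)) = omega_int d (mub_phase d j k x)"
  unfolding mub_phase_def by (rule omega_int_quadratic_periodic)

lemma displ_1_eigenvector_coord:
  assumes "odd d" and v: "v \<in> carrier_vec d" and eig: "displ d (1, j) *\<^sub>v v = omega d ^ k \<cdot>\<^sub>v v"
  shows "b < d \<Longrightarrow> v $ b = v $ 0 * omega_int d (mub_phase d j k (int b))"
proof (induction b)
  case 0
  then show ?case by (simp add: mub_phase_def)
next
  case (Suc b)
  then have "(b + 1) mod d = Suc b" by simp
  then have "(displ d (1, j) *\<^sub>v v) $ Suc b = tau d ^ j * omega_int d (int b * int j) * v $ b"
    using index_displ_mult_vec_shift[OF v, of b 1 j] Suc.prems by simp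
  moreover have "(displ d (1, j) *\<^sub>v v) $ Suc b = omega_int d (int k) * v $ Suc b"
    unfolding eig using Suc.prems v by (simp add: omega_power)
  ultimately have "v $ Suc b = omega_int d (- int k) * (tau d ^ j * omega_int d (int b * int j) * v $ b)"
    by (metis mult.assoc mult_1 omega_int_add omega_int_0 add.left_inverse)
  also have "\<dots> = omega_int d (int ((d + 1) div 2) * int j - int k + int j * int b) * v $ b"
    by (simp add: tau_power[OF assms(1)] omega_int_add[symmetric] algebra_simps)
  also have "\<dots> = v $ 0 * omega_int d (mub_phase d j k (int b + 1))"
    unfolding mub_phase_Suc using Suc
    by (simp add: omega_int_add[symmetric] algebra_simps)
  finally show ?case by (simp add: add.commute)
qed

definition chirp_vec :: "nat \<Rightarrow> nat \<Rightarrow> nat \<Rightarrow> complex vec" where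
  "chirp_vec d j k = vec d (\<lambda>b. omega_int d (mub_phase d j k (int b)))"

lemma displ_1_chirp_vec:
  assumes "odd d"
  shows "displ d (1, j) *\<^sub>v chirp_vec d j k = omega d ^ k \<cdot>\<^sub>v chirp_vec d j k"
proof (rule eq_vecI)
  have car: "chirp_vec d j k \<in> carrier_vec d"
    unfolding chirp_vec_def by simp
  then show "dim_vec (displ d (1, j) *\<^sub>v chirp_vec d j k) = dim_vec (omega d ^ k \<cdot>\<^sub>v chirp_vec d j k)"
    by simp
  fix a assume "a < dim_vec (omega d ^ k \<cdot>\<^sub>v chirp_vec d j k)"
  then have a: "a < d" using car by simp
  obtain b where b: "b < d" and ba: "(b + 1) mod d = a"
  proof (cases a)
    case 0
    then show ?thesis using a that[of "d - 1"] by simp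
  next
    case (Suc a')
    then show ?thesis using a that[of a'] by simp
  qed
  have "omega_int d (mub_phase d j k (int b + 1)) = omega_int d (mub_phase d j k (int a))"
    using periodic_mod[where F="\<lambda>x. omega_int d (mub_phase d j k x)", OF mub_phase_periodic[OF assms]]
      ba by (metis of_nat_1 of_nat_add zmod_int)
  then have per: "omega_int d (int k + mub_phase d j k (int b + 1))
      = omega_int d (int k + mub_phase d j k (int a))"
    by (simp add: omega_int_add)
  have "(displ d (1, j) *\<^sub>v chirp_vec d j k) $ a
      = tau d ^ j * omega_int d (int b * int j) * chirp_vec d j k $ b"
    using index_displ_mult_vec_shift[OF car b, of 1 j] ba by simp
  also have "\<dots> = omega_int d (int k + mub_phase d j k (int b + 1))"
    unfolding mub_phase_Suc using b
    by (simp add: chirp_vec_def tau_power[OF assms] omega_int_add[symmetric] algebra_simps)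
  also have "\<dots> = (omega d ^ k \<cdot>\<^sub>v chirp_vec d j k) $ a"
    using a per by (simp add: chirp_vec_def omega_power omega_int_add)
  finally show "(displ d (1, j) *\<^sub>v chirp_vec d j k) $ a = (omega d ^ k \<cdot>\<^sub>v chirp_vec d j k) $ a" .
qed

lemma displ_1_unit_eigenvector_exists:
  assumes "odd d"
  shows "\<exists>v. unit_vec_d d v \<and> displ d (1, j) *\<^sub>v v = omega d ^ k \<cdot>\<^sub>v v"
proof -
  have d: "d > 0" using assms by (cases d) auto
  have car: "chirp_vec d j k \<in> carrier_vec d"
    unfolding chirp_vec_def by simp
  define v where "v = complex_of_real (1 / sqrt (real d)) \<cdot>\<^sub>v chirp_vec d j k"
  have "(\<Sum>i<d. (cmod (v $ i))\<^sup>2) = (\<Sum>i<d. 1 / real d)"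
    by (rule sum.cong) (simp_all add: v_def chirp_vec_def norm_mult norm_divide power_divide)
  then have "unit_vec_d d v"
    unfolding unit_vec_d_def using car d by (simp add: v_def)
  moreover have "displ d (1, j) *\<^sub>v v = omega d ^ k \<cdot>\<^sub>v v"
    unfolding v_def using displ_1_chirp_vec[OF assms, of j k] car
    by (simp add: mult_mat_vec[OF displ_carrier car] smult_smult_assoc mult.commute)
  ultimately show ?thesis by blast
qed

definition mub_vec :: "nat \<Rightarrow> nat \<Rightarrow> nat \<Rightarrow> complex vec" where
  "mub_vec d j k = (if j = d then unit_vec d k
     else (SOME v. unit_vec_d d v \<and> displ d (1, j) *\<^sub>v v = omega d ^ k \<cdot>\<^sub>v v))"

lemma mub_proj_eq: "mub_proj d j k = proj d (mub_vec d j k)"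
  unfolding mub_proj_def mub_vec_def by simp

lemma mub_vec_eigenvector:
  assumes "odd d" and "j \<noteq> d"
  shows "unit_vec_d d (mub_vec d j k) \<and> displ d (1, j) *\<^sub>v mub_vec d j k = omega d ^ k \<cdot>\<^sub>v mub_vec d j k"
  unfolding mub_vec_def using someI_ex[OF displ_1_unit_eigenvector_exists[OF assms(1), of j k]] assms(2)
  by simp

lemma mub_vec_coord:
  assumes "odd d" and "j \<noteq> d" and "b < d"
  shows "mub_vec d j k $ b = mub_vec d j k $ 0 * omega_int d (mub_phase d j k (int b))"
proof -
  have "mub_vec d j k \<in> carrier_vec d"
    and "displ d (1, j) *\<^sub>v mub_vec d j k = omega d ^ k \<cdot>\<^sub>v mub_vec d j k"
    using mub_vec_eigenvector[OF assms(1,2), of k] unfolding unit_vec_d_def by auto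
  then show ?thesis by (rule displ_1_eigenvector_coord[OF assms(1) _ _ assms(3)])
qed

lemma norm_mub_vec_0:
  assumes "odd d" and "j \<noteq> d"
  shows "(cmod (mub_vec d j k $ 0))\<^sup>2 = 1 / real d"
proof -
  have "1 = (\<Sum>b<d. (cmod (mub_vec d j k $ b))\<^sup>2)"
    using mub_vec_eigenvector[OF assms, of k] unfolding unit_vec_d_def by simp
  also have "\<dots> = (\<Sum>b<d. (cmod (mub_vec d j k $ 0))\<^sup>2)"
  proof (intro sum.cong refl)
    fix b assume "b \<in> {..<d}"
    then show "(cmod (mub_vec d j k $ b))\<^sup>2 = (cmod (mub_vec d j k $ 0))\<^sup>2"
      using mub_vec_coord[OF assms, of b k] by (simp add: norm_mult)
  qed
  finally show ?thesis
    using assms(1) by (cases d) (auto simp: field_simps)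
qed

lemma norm_mub_vec_coord:
  assumes "odd d" and "j \<noteq> d" and "b < d"
  shows "(cmod (mub_vec d j k $ b))\<^sup>2 = 1 / real d"
  using mub_vec_coord[OF assms, of k] norm_mub_vec_0[OF assms(1,2), of k] by (simp add: norm_mult)

section \<open>Mutual unbiasedness\<close>

definition braket :: "nat \<Rightarrow> complex vec \<Rightarrow> complex vec \<Rightarrow> complex" where
  "braket d u v = (\<Sum>b<d. cnj (u $ b) * v $ b)"

lemma braket_unit_vec_left:
  assumes "k < d"
  shows "braket d (unit_vec d k) v = v $ k"
proof -
  have "braket d (unit_vec d k) v = (\<Sum>b<d. if b = k then v $ b else 0)"
    unfolding braket_def using assms by (intro sum.cong) auto
  then show ?thesis using assms by (simp add: sum_lessThan_delta)
qed

lemma braket_unit_vec_right: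
  assumes "k < d"
  shows "braket d u (unit_vec d k) = cnj (u $ k)"
proof -
  have "braket d u (unit_vec d k) = (\<Sum>b<d. if b = k then cnj (u $ b) else 0)"
    unfolding braket_def using assms by (intro sum.cong) auto
  then show ?thesis using assms by (simp add: sum_lessThan_delta)
qed

lemma trace_proj_mult_proj: "mtrace d (proj d u * proj d v) = complex_of_real ((cmod (braket d u v))\<^sup>2)"
proof -
  have "mtrace d (proj d u * proj d v) = (\<Sum>a<d. \<Sum>c<d. (u $ a * cnj (u $ c)) * (v $ c * cnj (v $ a)))"
    unfolding mtrace_def
    by (intro sum.cong refl, subst index_mult_mat_lessThan[of _ d d _ d]) (auto simp: proj_def)
  also have "\<dots> = cnj (braket d u v) * braket d u v"
    unfolding braket_def by (simp add: sum_product) (intro sum.cong refl, simp add: algebra_simps)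
  finally show ?thesis by (simp only: cnj_mult_self)
qed

lemma braket_mub_vec_eq_gauss_sum:
  assumes "odd d" and "j \<noteq> d" and "j' \<noteq> d"
  shows "braket d (mub_vec d j k) (mub_vec d j' k') = cnj (mub_vec d j k $ 0) * mub_vec d j' k' $ 0 *
    (\<Sum>b<d. omega_int d ((int ((d + 1) div 2) * (int j' - int j) - (int k' - int k)) * int b
      + (int j' - int j) * tri (int b)))"
  unfolding braket_def sum_distrib_left
proof (intro sum.cong refl)
  fix b assume "b \<in> {..<d}"
  then have b: "b < d" by simp
  have "cnj (mub_vec d j k $ b) * mub_vec d j' k' $ b = cnj (mub_vec d j k $ 0) * mub_vec d j' k' $ 0 *
      omega_int d (mub_phase d j' k' (int b) - mub_phase d j k (int b))"
    unfolding mub_vec_coord[OF assms(1,2) b, of k] mub_vec_coord[OF assms(1,3) b, of k']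
      cnj_omega_int_mult[symmetric] by (simp add: ac_simps)
  also have "mub_phase d j' k' (int b) - mub_phase d j k (int b)
      = (int ((d + 1) div 2) * (int j' - int j) - (int k' - int k)) * int b + (int j' - int j) * tri (int b)"
    unfolding mub_phase_def by (simp add: algebra_simps)
  finally show "cnj (mub_vec d j k $ b) * mub_vec d j' k' $ b = cnj (mub_vec d j k $ 0) * mub_vec d j' k' $ 0 *
      omega_int d ((int ((d + 1) div 2) * (int j' - int j) - (int k' - int k)) * int b
        + (int j' - int j) * tri (int b))" .
qed

lemma mub_overlap:
  assumes "prime d" and "odd d" and "j \<le> d" and "j' \<le> d" and "k < d" and "k' < d"
  shows "(cmod (braket d (mub_vec d j k) (mub_vec d j' k')))\<^sup>2
    = (if j = j' then (if k = k' then 1 else 0) else 1 / real d)"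
proof -
  have d: "d > 0" using assms(2) by (cases d) auto
  consider "j = d" "j' = d" | "j = d" "j' \<noteq> d" | "j \<noteq> d" "j' = d" | "j \<noteq> d" "j' \<noteq> d"
    by blast
  then show ?thesis
  proof cases
    case 1
    then show ?thesis using assms(5,6) by (simp add: mub_vec_def braket_unit_vec_left)
  next
    case 2
    then show ?thesis
      using assms(5) norm_mub_vec_coord[OF assms(2) 2(2) assms(5)] by (simp add: mub_vec_def braket_unit_vec_left)
  next
    case 3
    then show ?thesis
      using assms(6) norm_mub_vec_coord[OF assms(2) 3(1) assms(6)] by (simp add: mub_vec_def braket_unit_vec_right)
  next
    case 4
    define G where "G = (\<Sum>b<d. omega_int d ((int ((d + 1) div 2) * (int j' - int j) - (int k' - int k)) * int b
      + (int j' - int j) * tri (int b)))"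
    have "(cmod (braket d (mub_vec d j k) (mub_vec d j' k')))\<^sup>2
        = (cmod (mub_vec d j k $ 0))\<^sup>2 * (cmod (mub_vec d j' k' $ 0))\<^sup>2 * (cmod G)\<^sup>2"
      using braket_mub_vec_eq_gauss_sum[OF assms(2) 4, of k k']
      by (simp add: G_def norm_mult power_mult_distrib)
    also have "\<dots> = (cmod G)\<^sup>2 / (real d)\<^sup>2"
      unfolding norm_mub_vec_0[OF assms(2) 4(1)] norm_mub_vec_0[OF assms(2) 4(2)]
      by (simp add: power2_eq_square)
    finally have "(cmod (braket d (mub_vec d j k) (mub_vec d j' k')))\<^sup>2 = (cmod G)\<^sup>2 / (real d)\<^sup>2" .
    moreover have "(cmod G)\<^sup>2 = (if j = j' then (if k = k' then (real d)\<^sup>2 else 0) else real d)"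
    proof (cases "j = j'")
      case True
      then have "G = (\<Sum>b<d. omega_int d (int b * (int k - int k')))"
        unfolding G_def by (intro sum.cong) (simp_all add: algebra_simps)
      then show ?thesis
        using True d assms(5,6) by (simp add: sum_omega_int dvd_diff_less_iff)
    next
      case False
      have "\<not> int d dvd (int j' - int j)"
        using False assms(3,4) 4 dvd_diff_less_iff[of j' d j] by simp
      then show ?thesis
        using False quadratic_gauss_sum_norm[OF assms(1,2)] unfolding G_def by simp
    qed
    ultimately show ?thesis
      using d by (simp add: power2_eq_square)
  qed
qed

section \<open>The set \<open>\<Omega>\<close>\<close>

definition overlap_bound :: "nat \<Rightarrow> real" where
  "overlap_bound d = 1 / real d + (real d - 1) / real d * sqrt (1 / (real d + 1))"

lemma trace_mult_eq_sum:
  assumes "A \<in> carrier_mat d d" and "M \<in> carrier_mat d d"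
  shows "mtrace d (A * M) = (\<Sum>a<d. \<Sum>c<d. A $$ (a, c) * M $$ (c, a))"
  unfolding mtrace_def using assms by (intro sum.cong refl index_mult_mat_lessThan) auto

lemma sum_swap_pairs:
  "(\<Sum>a\<in>A. \<Sum>c\<in>C. \<Sum>j\<in>J. \<Sum>k\<in>K. f a c j k) = (\<Sum>j\<in>J. \<Sum>k\<in>K. \<Sum>a\<in>A. \<Sum>c\<in>C. f a c j k)"
proof -
  have "(\<Sum>a\<in>A. \<Sum>c\<in>C. \<Sum>j\<in>J. \<Sum>k\<in>K. f a c j k) = (\<Sum>a\<in>A. \<Sum>j\<in>J. \<Sum>c\<in>C. \<Sum>k\<in>K. f a c j k)"
    by (rule sum.cong[OF refl], rule sum.swap)
  also have "\<dots> = (\<Sum>j\<in>J. \<Sum>a\<in>A. \<Sum>k\<in>K. \<Sum>c\<in>C. f a c j k)"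
    by (subst sum.swap) (rule sum.cong[OF refl], rule sum.cong[OF refl], rule sum.swap)
  also have "\<dots> = (\<Sum>j\<in>J. \<Sum>k\<in>K. \<Sum>a\<in>A. \<Sum>c\<in>C. f a c j k)"
    by (rule sum.cong[OF refl], rule sum.swap)
  finally show ?thesis .
qed

lemma mub_proj_carrier [simp]: "mub_proj d j k \<in> carrier_mat d d"
  unfolding mub_proj_eq proj_def by simp

lemma trace_rho_of_mult:
  assumes "M \<in> carrier_mat d d"
  shows "mtrace d (rho_of d \<alpha> * M) = (\<Sum>j\<in>{0..d}. \<Sum>k\<in>{0..<d}.
    (pjk d \<alpha> j k - 1 / (of_nat d + 1)) * mtrace d (mub_proj d j k * M))"
proof -
  have "mtrace d (rho_of d \<alpha> * M) = (\<Sum>a<d. \<Sum>c<d. rho_of d \<alpha> $$ (a, c) * M $$ (c, a))"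
    using assms by (intro trace_mult_eq_sum) (simp_all add: rho_of_def)
  also have "\<dots> = (\<Sum>a<d. \<Sum>c<d. \<Sum>j\<in>{0..d}. \<Sum>k\<in>{0..<d}.
      (pjk d \<alpha> j k - 1 / (of_nat d + 1)) * (mub_proj d j k $$ (a, c) * M $$ (c, a)))"
    by (intro sum.cong refl) (simp add: rho_of_def sum_distrib_right mult.assoc)
  also have "\<dots> = (\<Sum>j\<in>{0..d}. \<Sum>k\<in>{0..<d}. \<Sum>a<d. \<Sum>c<d.
      (pjk d \<alpha> j k - 1 / (of_nat d + 1)) * (mub_proj d j k $$ (a, c) * M $$ (c, a)))"
    by (rule sum_swap_pairs)
  also have "\<dots> = (\<Sum>j\<in>{0..d}. \<Sum>k\<in>{0..<d}.
      (pjk d \<alpha> j k - 1 / (of_nat d + 1)) * mtrace d (mub_proj d j k * M))"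
    by (intro sum.cong refl)
      (simp add: trace_mult_eq_sum[OF mub_proj_carrier assms] sum_distrib_left)
  finally show ?thesis .
qed

lemma sum_pjk:
  assumes "d > 0"
  shows "(\<Sum>k\<in>{0..<d}. pjk d \<alpha> j k) = 1"
proof -
  define C where "C = 1 / (of_nat d * complex_of_real (sqrt (real d + 1)))"
  have "(\<Sum>k\<in>{0..<d}. pjk d \<alpha> j k)
      = (\<Sum>k<d. 1 / of_nat d + C * (\<Sum>r\<in>{1..d-1}. omega_pow d (\<alpha> j r) * omega_int d (int k * int r)))"
    unfolding pjk_def C_def atLeast0LessThan
    by (intro sum.cong refl) (simp add: omega_pow_add flip: omega_pow_of_int)
  also have "\<dots> = 1 + C * (\<Sum>r\<in>{1..d-1}. omega_pow d (\<alpha> j r) * (\<Sum>k<d. omega_int d (int k * int r)))"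
    using assms
    by (simp add: sum.distrib sum_distrib_left sum_distrib_right mult.assoc sum.swap[of _ "{..<d}"])
  also have "(\<Sum>r\<in>{1..d-1}. omega_pow d (\<alpha> j r) * (\<Sum>k<d. omega_int d (int k * int r))) = 0"
  proof (intro sum.neutral ballI)
    fix r assume "r \<in> {1..d-1}"
    then have "\<not> int d dvd int r" using assms by (auto simp: of_nat_dvd_iff dest: dvd_imp_le)
    then show "omega_pow d (\<alpha> j r) * (\<Sum>k<d. omega_int d (int k * int r)) = 0"
      by (simp add: sum_omega_int[OF assms])
  qed
  finally show ?thesis by simp
qed

lemma trace_rho_of_mult_mub_proj:
  assumes "prime d" and "odd d" and "j \<le> d" and "k < d"
  shows "mtrace d (rho_of d \<alpha> * mub_proj d j k) = pjk d \<alpha> j k"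
proof -
  have d: "d > 0" using assms(2) by (cases d) auto
  define c where "c j' k' = pjk d \<alpha> j' k' - 1 / (of_nat d + 1)" for j' k'
  have sum_c: "(\<Sum>k'\<in>{0..<d}. c j' k') = 1 / (of_nat d + 1)" for j'
  proof -
    have "(of_nat d + 1 :: complex) \<noteq> 0"
      by (metis of_nat_Suc of_nat_eq_0_iff Suc_eq_plus1 add.commute nat.distinct(1))
    have "(\<Sum>k'\<in>{0..<d}. c j' k') = 1 - of_nat d * (1 / (of_nat d + 1))"
      unfolding c_def by (simp add: sum_subtractf sum_pjk[OF d])
    also have "\<dots> = 1 / (of_nat d + 1)"
      using \<open>(of_nat d + 1 :: complex) \<noteq> 0\<close> by (simp add: field_simps)
    finally show ?thesis .
  qed
  have "mtrace d (rho_of d \<alpha> * mub_proj d j k) = (\<Sum>j'\<in>{0..d}. \<Sum>k'\<in>{0..<d}.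
      c j' k' * (if j' = j then (if k' = k then 1 else 0) else 1 / of_nat d))"
    unfolding trace_rho_of_mult[OF mub_proj_carrier] c_def
    using assms by (intro sum.cong refl) (simp add: mub_proj_eq trace_proj_mult_proj mub_overlap)
  also have "\<dots> = (\<Sum>k'\<in>{0..<d}. c j k' * (if k' = k then 1 else 0))
      + (\<Sum>j'\<in>{0..d} - {j}. \<Sum>k'\<in>{0..<d}. c j' k' * (1 / of_nat d))"
    using assms(3) by (subst sum.remove[of _ j]) (auto intro!: sum.cong)
  also have "(\<Sum>k'\<in>{0..<d}. c j k' * (if k' = k then 1 else 0)) = c j k"
    using assms(4) by (simp add: sum.delta' if_distrib cong: if_cong)
  also have "(\<Sum>j'\<in>{0..d} - {j}. \<Sum>k'\<in>{0..<d}. c j' k' * (1 / of_nat d))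
      = (\<Sum>j'\<in>{0..d} - {j}. 1 / (of_nat d + 1) * (1 / of_nat d))"
    by (rule sum.cong[OF refl]) (simp only: sum_distrib_right[symmetric] sum_c)
  also have "c j k + \<dots> = pjk d \<alpha> j k"
    using assms(3) d by (simp add: c_def)
  finally show ?thesis .
qed

lemma Im_sum_reflection_cnj:
  fixes f :: "nat \<Rightarrow> complex"
  assumes "\<And>r. r \<in> {1..n} \<Longrightarrow> f (n + 1 - r) = cnj (f r)"
  shows "Im (\<Sum>r\<in>{1..n}. f r) = 0"
proof -
  have "(\<Sum>r\<in>{1..n}. f r) = (\<Sum>r\<in>{1..n}. f (n + 1 - r))"
    by (rule sum.atLeastAtMost_rev[of f 1 n])
  also have "\<dots> = cnj (\<Sum>r\<in>{1..n}. f r)"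
    using assms by simp
  finally show ?thesis
    by (metis cnj.sel(2) neg_equal_zero)
qed

lemma pjk_real_le_overlap_bound:
  assumes "d > 0" and antisym: "\<forall>r\<in>{1..d-1}. \<alpha> j (d - r) = - \<alpha> j r"
  shows "Im (pjk d \<alpha> j k) = 0 \<and> Re (pjk d \<alpha> j k) \<le> overlap_bound d"
proof -
  define f where "f r = omega_pow d (\<alpha> j r + real (k * r))" for r
  define S where "S = (\<Sum>r\<in>{1..d-1}. f r)"
  define c where "c = 1 / (real d * sqrt (real d + 1))"
  have pjk: "pjk d \<alpha> j k = complex_of_real (1 / real d) + complex_of_real c * S"
    unfolding pjk_def S_def f_def c_def by simp
  have "f (d - 1 + 1 - r) = cnj (f r)" if "r \<in> {1..d-1}" for r
  proof -
    have "k * r \<le> k * d" using that by (auto intro: mult_le_mono2)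
    then have "real (k * (d - r)) = real k * real d - real k * real r"
      by (simp add: of_nat_diff diff_mult_distrib2)
    then have eq: "\<alpha> j (d - r) + real (k * (d - r)) = - (\<alpha> j r + real (k * r)) + of_int (int k * int d)"
      using that antisym by simp
    have "omega_int d (int k * int d) = 1"
      using omega_int_eq_1_iff[OF assms(1)] by simp
    then have "f (d - r) = omega_pow d (- (\<alpha> j r + real (k * r)))"
      unfolding f_def by (simp only: eq omega_pow_add omega_pow_of_int mult_1_right)
    then have "f (d - r) = cnj (f r)"
      unfolding f_def by (simp only: cnj_omega_pow)
    moreover have "d - 1 + 1 - r = d - r" using assms(1) by simp
    ultimately show ?thesis by simp
  qed
  then have "Im S = 0"
    unfolding S_def by (rule Im_sum_reflection_cnj)
  have "Re S \<le> cmod S" by (rule complex_Re_le_cmod)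
  also have "\<dots> \<le> (\<Sum>r\<in>{1..d-1}. cmod (f r))" unfolding S_def by (rule norm_sum)
  also have "\<dots> = real d - 1" using assms(1) by (simp add: f_def of_nat_diff)
  finally have "c * Re S \<le> c * (real d - 1)"
    by (rule mult_left_mono) (simp add: c_def)
  moreover have "c * (real d - 1) = (real d - 1) / real d * sqrt (1 / (real d + 1))"
    unfolding c_def by (simp add: real_sqrt_divide field_simps)
  ultimately show ?thesis
    unfolding pjk overlap_bound_def using \<open>Im S = 0\<close> by simp
qed

lemma Omega_trace_mub_proj:
  assumes "prime d" and "odd d" and "\<rho> \<in> Omega d" and "j \<le> d" and "k < d"
  shows "Im (mtrace d (\<rho> * mub_proj d j k)) = 0 \<and> Re (mtrace d (\<rho> * mub_proj d j k)) \<le> overlap_bound d"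
proof -
  obtain \<alpha> where \<rho>: "\<rho> = rho_of d \<alpha>" and antisym: "\<forall>r\<in>{1..d-1}. \<alpha> j (d - r) = - \<alpha> j r"
    using assms(3,4) unfolding Omega_def by blast
  have "d > 0" using assms(2) by (cases d) auto
  from pjk_real_le_overlap_bound[where \<alpha>=\<alpha> and j=j, OF this antisym] show ?thesis
    unfolding \<rho> trace_rho_of_mult_mub_proj[OF assms(1,2,4,5)] .
qed

section \<open>Fiducial states\<close>

lemma bound_from_flat_correlations:
  fixes x :: real and Z :: "nat \<Rightarrow> complex"
  assumes "d > 0" and sum_Z: "complex_of_real (real d * x) = (\<Sum>t<d. Z t)" and "Z 0 = 1"
    and flat: "\<And>t. 0 < t \<Longrightarrow> t < d \<Longrightarrow> (cmod (Z t))\<^sup>2 = 1 / (real d + 1)"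
  shows "x \<le> overlap_bound d"
proof -
  have norm_Z: "cmod (Z t) = sqrt (1 / (real d + 1))" if "t \<in> {1..<d}" for t
  proof -
    from that have "0 < t" "t < d" by auto
    from flat[OF this] show ?thesis by (metis norm_ge_zero real_sqrt_unique)
  qed
  have "{..<d} = insert 0 {1..<d}" using assms(1) by auto
  have "real d * x \<le> cmod (complex_of_real (real d * x))"
    by (metis Re_complex_of_real complex_Re_le_cmod)
  also have "\<dots> \<le> (\<Sum>t<d. cmod (Z t))" unfolding sum_Z by (rule norm_sum)
  also have "\<dots> = cmod (Z 0) + (\<Sum>t\<in>{1..<d}. cmod (Z t))"
    unfolding \<open>{..<d} = insert 0 {1..<d}\<close> by simp
  also have "\<dots> = 1 + (real d - 1) * sqrt (1 / (real d + 1))"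
    using assms(1,3) norm_Z by (simp add: of_nat_diff)
  finally have "x \<le> (1 + (real d - 1) * sqrt (1 / (real d + 1))) / real d"
    using assms(1) by (simp add: pos_le_divide_eq mult.commute)
  also have "\<dots> = overlap_bound d"
    unfolding overlap_bound_def by (simp add: add_divide_distrib)
  finally show ?thesis .
qed

lemma displ_expectation:
  assumes "\<phi> \<in> carrier_vec d"
  shows "conjugate \<phi> \<bullet> (displ d (t, p2) *\<^sub>v \<phi>)
    = tau d ^ (t * p2) * (\<Sum>b<d. cnj (\<phi> $ ((b + t) mod d)) * omega_int d (int b * int p2) * \<phi> $ b)"
proof -
  have "conjugate \<phi> \<bullet> (displ d (t, p2) *\<^sub>v \<phi>) = (\<Sum>a<d. cnj (\<phi> $ a) * (displ d (t, p2) *\<^sub>v \<phi>) $ a)"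
    using assms by (simp add: scalar_prod_def lessThan_atLeast0)
  also have "\<dots> = (\<Sum>b<d. cnj (\<phi> $ ((b + t) mod d)) * (displ d (t, p2) *\<^sub>v \<phi>) $ ((b + t) mod d))"
    by (rule sum.reindex_bij_betw[OF bij_betw_add_mod, symmetric])
  also have "\<dots> = tau d ^ (t * p2) * (\<Sum>b<d. cnj (\<phi> $ ((b + t) mod d)) * omega_int d (int b * int p2) * \<phi> $ b)"
    unfolding sum_distrib_left
    by (intro sum.cong refl)
      (simp add: index_displ_mult_vec_shift[OF assms] algebra_simps del: index_mult_mat_vec)
  finally show ?thesis .
qed

lemma unit_vec_d_sum_cnj_mult:
  fixes \<phi> :: "complex vec"
  assumes "unit_vec_d d \<phi>"
  shows "(\<Sum>b<d. cnj (\<phi> $ b) * \<phi> $ b) = 1"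
proof -
  have "(\<Sum>b<d. cnj (\<phi> $ b) * \<phi> $ b) = (\<Sum>b<d. complex_of_real ((cmod (\<phi> $ b))\<^sup>2))"
    by (intro sum.cong refl) (rule cnj_mult_self)
  also have "\<dots> = 1"
    unfolding of_real_sum[symmetric] using assms unfolding unit_vec_d_def by simp
  finally show ?thesis .
qed

lemma fiducial_coord_bound:
  fixes \<phi> :: "complex vec"
  assumes "odd d" and fid: "fiducial d \<phi>" and "k < d"
  shows "(cmod (\<phi> $ k))\<^sup>2 \<le> overlap_bound d"
proof -
  have d: "d > 0" using assms(1) by (cases d) auto
  have \<phi>: "\<phi> \<in> carrier_vec d" and unit: "unit_vec_d d \<phi>"
    using fid unfolding fiducial_def unit_vec_d_def by auto
  \<comment> \<open>Fourier inversion along the clock direction: summing over \<open>t\<close> isolates \<open>d |\<phi>\<^sub>k|\<^sup>2\<close>.\<close>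
  define Z where "Z t = omega_int d (- (int k * int t)) * (conjugate \<phi> \<bullet> (displ d (0, t) *\<^sub>v \<phi>))" for t
  have Z: "Z t = (\<Sum>b<d. cnj (\<phi> $ b) * \<phi> $ b * omega_int d (int t * (int b - int k)))" for t
    unfolding Z_def displ_expectation[OF \<phi>] sum_distrib_left
    by (intro sum.cong refl) (simp add: omega_int_add[symmetric] algebra_simps)
  have "(\<Sum>t<d. Z t) = (\<Sum>b<d. cnj (\<phi> $ b) * \<phi> $ b * (\<Sum>t<d. omega_int d (int t * (int b - int k))))"
    unfolding Z sum_distrib_left by (rule sum.swap)
  also have "\<dots> = (\<Sum>b<d. if b = k then cnj (\<phi> $ b) * \<phi> $ b * of_nat d else 0)"
    by (intro sum.cong refl) (simp add: sum_omega_int[OF d] dvd_diff_less_iff assms(3))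
  also have "\<dots> = cnj (\<phi> $ k) * \<phi> $ k * of_nat d"
    using assms(3) by (rule sum_lessThan_delta)
  also have "\<dots> = complex_of_real (real d * (cmod (\<phi> $ k))\<^sup>2)"
    by (subst cnj_mult_self) simp
  finally have "complex_of_real (real d * (cmod (\<phi> $ k))\<^sup>2) = (\<Sum>t<d. Z t)" ..
  moreover have "Z 0 = 1"
    using unit_vec_d_sum_cnj_mult[OF unit] by (simp add: Z)
  moreover have "(cmod (Z t))\<^sup>2 = 1 / (real d + 1)" if "0 < t" "t < d" for t
    using fid that d unfolding fiducial_def Z_def by (auto simp: norm_mult)
  ultimately show ?thesis by (rule bound_from_flat_correlations[OF d])
qed

lemma norm_sum_square_eq_sum_correlations:
  fixes \<psi> :: "int \<Rightarrow> complex"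
  assumes "d > 0" and "\<And>x. \<psi> (x + int d) = \<psi> x"
  shows "complex_of_real ((cmod (\<Sum>b<d. \<psi> (int b)))\<^sup>2)
    = (\<Sum>t<d. \<Sum>b<d. cnj (\<psi> (int b)) * \<psi> (int b + int t))"
proof -
  have "complex_of_real ((cmod (\<Sum>b<d. \<psi> (int b)))\<^sup>2) = (\<Sum>b<d. \<Sum>c<d. cnj (\<psi> (int b)) * \<psi> (int c))"
    by (simp only: cnj_mult_self[symmetric] cnj_sum sum_product)
  also have "\<dots> = (\<Sum>b<d. \<Sum>t<d. cnj (\<psi> (int b)) * \<psi> (int b + int t))"
  proof (rule sum.cong[OF refl])
    fix b
    show "(\<Sum>c<d. cnj (\<psi> (int b)) * \<psi> (int c)) = (\<Sum>t<d. cnj (\<psi> (int b)) * \<psi> (int b + int t))"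
      using sum_periodic_shift[where F="\<lambda>x. cnj (\<psi> (int b)) * \<psi> x", OF assms(1), of "int b"] assms(2)
      by simp
  qed
  also have "\<dots> = (\<Sum>t<d. \<Sum>b<d. cnj (\<psi> (int b)) * \<psi> (int b + int t))"
    by (rule sum.swap)
  finally show ?thesis .
qed

text \<open>The overlap of \<open>\<phi>\<close> with \<open>mub_vec d j k\<close> is, up to the constant \<open>mub_vec d j k $ 0\<close>, the sum
  of the dechirped coordinates of \<open>\<phi>\<close>, whose autocorrelations are expectation values of
  \<open>D\<^sub>(\<^sub>t\<^sub>,\<^sub>j\<^sub>t\<^sub>)\<close>.\<close>

definition chirped :: "nat \<Rightarrow> nat \<Rightarrow> nat \<Rightarrow> complex vec \<Rightarrow> int \<Rightarrow> complex" where
  "chirped d j k \<phi> x = \<phi> $ nat (x mod int d) * omega_int d (- mub_phase d j k x)"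

lemma chirped_periodic:
  assumes "odd d"
  shows "chirped d j k \<phi> (x + int d) = chirped d j k \<phi> x"
  using mub_phase_periodic[OF assms, of j k x]
  by (simp add: chirped_def cnj_omega_int[symmetric])

lemma braket_mub_vec_eq_chirped:
  assumes "odd d" and "j \<noteq> d"
  shows "braket d \<phi> (mub_vec d j k) = mub_vec d j k $ 0 * cnj (\<Sum>b<d. chirped d j k \<phi> (int b))"
  unfolding braket_def cnj_sum sum_distrib_left
proof (intro sum.cong refl)
  fix b assume "b \<in> {..<d}"
  then show "cnj (\<phi> $ b) * mub_vec d j k $ b = mub_vec d j k $ 0 * cnj (chirped d j k \<phi> (int b))"
    using mub_vec_coord[OF assms, of b k] by (simp add: chirped_def cnj_omega_int)
qed

lemma fiducial_chirped_correlation: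
  assumes "odd d" and fid: "fiducial d \<phi>" and "0 < t" and "t < d"
  shows "(cmod (\<Sum>b<d. cnj (chirped d j k \<phi> (int b)) * chirped d j k \<phi> (int b + int t)))\<^sup>2
    = 1 / (real d + 1)"
proof -
  have d: "d > 0" using assms(1) by (cases d) auto
  have \<phi>: "\<phi> \<in> carrier_vec d"
    using fid unfolding fiducial_def unit_vec_d_def by auto
  define I where "I = (\<Sum>b<d. cnj (\<phi> $ b) * \<phi> $ ((b + t) mod d) * omega_int d (- (int b * int j * int t)))"
  have "(\<Sum>b<d. cnj (chirped d j k \<phi> (int b)) * chirped d j k \<phi> (int b + int t))
      = omega_int d (- mub_phase d j k (int t)) * I"
    unfolding I_def sum_distrib_left
  proof (intro sum.cong refl)
    fix b assume "b \<in> {..<d}"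
    have "cnj (omega_int d (- mub_phase d j k (int b))) * omega_int d (- mub_phase d j k (int b + int t))
        = omega_int d (- mub_phase d j k (int t)) * omega_int d (- (int b * int j * int t))"
      unfolding cnj_omega_int_mult mub_phase_add omega_int_add[symmetric] by (simp add: algebra_simps)
    moreover have "nat ((int b + int t) mod int d) = (b + t) mod d"
      by (metis nat_int of_nat_add zmod_int)
    ultimately show "cnj (chirped d j k \<phi> (int b)) * chirped d j k \<phi> (int b + int t)
        = omega_int d (- mub_phase d j k (int t)) *
          (cnj (\<phi> $ b) * \<phi> $ ((b + t) mod d) * omega_int d (- (int b * int j * int t)))"
      using \<open>b \<in> {..<d}\<close> unfolding chirped_def by (simp add: algebra_simps)
  qed
  moreover have "conjugate \<phi> \<bullet> (displ d (t, (j * t) mod d) *\<^sub>v \<phi>) = tau d ^ (t * ((j * t) mod d)) * cnj I"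
    unfolding displ_expectation[OF \<phi>] I_def cnj_sum
  proof (intro arg_cong[where f="\<lambda>z. tau d ^ (t * ((j * t) mod d)) * z"] sum.cong refl)
    fix b
    have "int ((j * t) mod d) = (int j * int t) mod int d"
      by (simp add: zmod_int)
    then have "int b * int ((j * t) mod d) mod int d = int b * int j * int t mod int d"
      by (metis mod_mult_right_eq mult.assoc)
    then have "omega_int d (int b * int ((j * t) mod d)) = omega_int d (int b * int j * int t)"
      using d by (rule omega_int_cong[rotated])
    then show "cnj (\<phi> $ ((b + t) mod d)) * omega_int d (int b * int ((j * t) mod d)) * \<phi> $ b
        = cnj (cnj (\<phi> $ b) * \<phi> $ ((b + t) mod d) * omega_int d (- (int b * int j * int t)))"
      by (simp add: cnj_omega_int)
  qed
  moreover have "(cmod (conjugate \<phi> \<bullet> (displ d (t, (j * t) mod d) *\<^sub>v \<phi>)))\<^sup>2 = 1 / (real d + 1)"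
    using fid assms(3,4) d unfolding fiducial_def by auto
  ultimately show ?thesis
    using assms(1) by (simp add: norm_mult tau_power)
qed

lemma fiducial_mub_vec_bound:
  assumes "odd d" and fid: "fiducial d \<phi>" and "j < d"
  shows "(cmod (braket d \<phi> (mub_vec d j k)))\<^sup>2 \<le> overlap_bound d"
proof -
  have d: "d > 0" using assms(1) by (cases d) auto
  have "j \<noteq> d" using assms(3) by simp
  define Z where "Z t = (\<Sum>b<d. cnj (chirped d j k \<phi> (int b)) * chirped d j k \<phi> (int b + int t))" for t
  have "complex_of_real (real d * (cmod (braket d \<phi> (mub_vec d j k)))\<^sup>2)
      = complex_of_real ((cmod (\<Sum>b<d. chirped d j k \<phi> (int b)))\<^sup>2)"
    using norm_mub_vec_0[OF assms(1) \<open>j \<noteq> d\<close>, of k] d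
    by (simp add: braket_mub_vec_eq_chirped[OF assms(1) \<open>j \<noteq> d\<close>] norm_mult power_mult_distrib
        del: cnj_sum)
  also have "\<dots> = (\<Sum>t<d. Z t)"
    unfolding Z_def
    by (rule norm_sum_square_eq_sum_correlations[where \<psi>="chirped d j k \<phi>", OF d chirped_periodic[OF assms(1)]])
  finally have "complex_of_real (real d * (cmod (braket d \<phi> (mub_vec d j k)))\<^sup>2) = (\<Sum>t<d. Z t)" .
  moreover have "Z 0 = 1"
  proof -
    have "cnj (chirped d j k \<phi> (int b)) * chirped d j k \<phi> (int b) = cnj (\<phi> $ b) * \<phi> $ b" if "b < d" for b
      unfolding cnj_mult_self using that by (simp add: chirped_def norm_mult)
    then show ?thesis
      using fid unit_vec_d_sum_cnj_mult[of d \<phi>] unfolding fiducial_def Z_def by simp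
  qed
  moreover have "(cmod (Z t))\<^sup>2 = 1 / (real d + 1)" if "0 < t" "t < d" for t
    unfolding Z_def by (rule fiducial_chirped_correlation[OF assms(1) fid that])
  ultimately show ?thesis by (rule bound_from_flat_correlations[OF d])
qed

lemma fiducial_trace_mub_proj:
  assumes "odd d" and "fiducial d \<phi>" and "j \<le> d" and "k < d"
  shows "Im (mtrace d (proj d \<phi> * mub_proj d j k)) = 0
    \<and> Re (mtrace d (proj d \<phi> * mub_proj d j k)) \<le> overlap_bound d"
proof -
  have "(cmod (braket d \<phi> (mub_vec d j k)))\<^sup>2 \<le> overlap_bound d"
  proof (cases "j = d")
    case True
    then show ?thesis
      using fiducial_coord_bound[OF assms(1,2,4)] assms(4) by (simp add: mub_vec_def braket_unit_vec_right)
  next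
    case False
    then show ?thesis
      using assms(3) fiducial_mub_vec_bound[OF assms(1,2)] by simp
  qed
  then show ?thesis
    by (simp add: mub_proj_eq trace_proj_mult_proj)
qed

theorem mainTheorem4:
  fixes d :: nat
  assumes "prime d" and "odd d"
  shows "(\<forall>\<rho>\<in>Omega d. \<forall>j\<le>d. \<forall>k<d.
            Im (mtrace d (\<rho> * mub_proj d j k)) = 0 \<and>
            Re (mtrace d (\<rho> * mub_proj d j k))
              \<le> 1 / real d + (real d - 1) / real d * sqrt (1 / (real d + 1)))
       \<and> (\<forall>\<phi>. fiducial d \<phi> \<longrightarrow> (\<forall>j\<le>d. \<forall>k<d.
            Im (mtrace d (proj d \<phi> * mub_proj d j k)) = 0 \<and>
            Re (mtrace d (proj d \<phi> * mub_proj d j k))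
              \<le> 1 / real d + (real d - 1) / real d * sqrt (1 / (real d + 1))))"
  using Omega_trace_mub_proj[OF assms] fiducial_trace_mub_proj[OF assms(2)]
  unfolding overlap_bound_def by blast

end
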